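(* Let $N=2$, $\Omega\subset\mathbb{R}^2$ a bounded domain, $F$ as in the context, $\lambda>0$, $0<R_1<R_2$, and let $\varphi\in C^\infty(\mathbb{R})$ be nonincreasing with $\varphi(x)=1$ for $x\le R_1$ and $\varphi(x)=0$ for $x\ge R_2$. Define on $W_0^{1,2}(\Omega)$ $$J(u)=\frac12\int_\Omega F^2(\nabla u)\,dx-\lambda\int_\Omega\varphi\big(\|u\|_{W_0^{1,2}(\Omega)}\big)e^u\,dx.$$ Then $\inf_{u\in W_0^{1,2}(\Omega)}J(u)<-\lambda|\Omega|$.
   Context: Standing assumptions on $F$: $F:\mathbb{R}^N\to[0,\infty)$ is convex, $F\in C^2(\mathbb{R}^N\setminus\{0\})$, $F(t\xi)=|t|F(\xi)$, $F(\xi)>0$ for $\xi\neq0$; $a|\xi|\le F(\xi)\le b|\xi|$ for constants $0<a\le b$; and $\mu^2|V|^2\le\sum_{i,j}F_{\xi_i\xi_j}(\xi)V_iV_j\le\Lambda|V|^2$ for all unit $\xi$ and all $V\perp\xi$. $|\Omega|$ is the Lebesgue measure of $\Omega$. *)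

theory Defs
  imports "HOL-Analysis.Analysis"
begin

definition pd :: "2 \<Rightarrow> (real^2 \<Rightarrow> real) \<Rightarrow> real^2 \<Rightarrow> real" where
  "pd i f x = deriv (\<lambda>t. f (x + t *\<^sub>R axis i 1)) 0"

definition pds :: "2 list \<Rightarrow> (real^2 \<Rightarrow> real) \<Rightarrow> real^2 \<Rightarrow> real" where
  "pds is f = foldr pd is f"

definition smooth2 :: "(real^2 \<Rightarrow> real) \<Rightarrow> bool" where
  "smooth2 f \<longleftrightarrow> (\<forall>is. continuous_on UNIV (pds is f) \<and>
      (\<forall>i x. (\<lambda>t. pds is f (x + t *\<^sub>R axis i 1)) differentiable (at 0)))"

definition grad2 :: "(real^2 \<Rightarrow> real) \<Rightarrow> real^2 \<Rightarrow> real^2" where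
  "grad2 f x = (\<chi> i. pd i f x)"

definition smooth1 :: "(real \<Rightarrow> real) \<Rightarrow> bool" where
  "smooth1 g \<longleftrightarrow> (\<forall>k x. ((deriv ^^ k) g) differentiable (at x))"

definition test_fn :: "(real^2) set \<Rightarrow> (real^2 \<Rightarrow> real) \<Rightarrow> bool" where
  "test_fn \<Omega> \<psi> \<longleftrightarrow> smooth2 \<psi> \<and> compact (closure {x. \<psi> x \<noteq> 0}) \<and>
      closure {x. \<psi> x \<noteq> 0} \<subseteq> \<Omega>"

text \<open>u belongs to W_0^{1,2}(Omega) with weak gradient Du: u, Du are limits in L^2
  (resp. of the gradients) of test functions on Omega.\<close>
definition W012 :: "(real^2) set \<Rightarrow> (real^2 \<Rightarrow> real) \<Rightarrow> (real^2 \<Rightarrow> real^2) \<Rightarrow> bool" where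
  "W012 \<Omega> u Du \<longleftrightarrow> u \<in> borel_measurable lborel \<and> Du \<in> borel_measurable lborel \<and>
     (\<exists>\<psi>. (\<forall>k. test_fn \<Omega> (\<psi> k)) \<and>
        (\<lambda>k. \<integral>\<^sup>+ x. ennreal ((\<psi> k x - u x)\<^sup>2) \<partial>lborel) \<longlonglongrightarrow> 0 \<and>
        (\<lambda>k. \<integral>\<^sup>+ x. ennreal ((norm (grad2 (\<psi> k) x - Du x))\<^sup>2) \<partial>lborel) \<longlonglongrightarrow> 0)"

definition W012_norm :: "(real^2) set \<Rightarrow> (real^2 \<Rightarrow> real^2) \<Rightarrow> real" where
  "W012_norm \<Omega> Du = sqrt (\<integral>x\<in>\<Omega>. (norm (Du x))\<^sup>2 \<partial>lborel)"

definition F_assms :: "(real^2 \<Rightarrow> real) \<Rightarrow> real \<Rightarrow> real \<Rightarrow> real \<Rightarrow> real \<Rightarrow> bool" where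
  "F_assms F a b \<mu> \<Lambda> \<longleftrightarrow>
     (\<forall>\<xi>. F \<xi> \<ge> 0) \<and> convex_on UNIV F \<and>
     (\<exists>G H. (\<forall>\<xi>. \<xi> \<noteq> 0 \<longrightarrow> (F has_derivative (\<lambda>h. G \<xi> \<bullet> h)) (at \<xi>) \<and>
                                (G has_derivative (\<lambda>h. H \<xi> *v h)) (at \<xi>)) \<and>
            continuous_on (UNIV - {0}) H \<and>
            (\<forall>\<xi> V. norm \<xi> = 1 \<longrightarrow> V \<bullet> \<xi> = 0 \<longrightarrow>
                 \<mu>\<^sup>2 * (norm V)\<^sup>2 \<le> V \<bullet> (H \<xi> *v V) \<and> V \<bullet> (H \<xi> *v V) \<le> \<Lambda> * (norm V)\<^sup>2)) \<and>
     (\<forall>t \<xi>. F (t *\<^sub>R \<xi>) = \<bar>t\<bar> * F \<xi>) \<and>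
     (\<forall>\<xi>. \<xi> \<noteq> 0 \<longrightarrow> F \<xi> > 0) \<and>
     0 < a \<and> a \<le> b \<and> (\<forall>\<xi>. a * norm \<xi> \<le> F \<xi> \<and> F \<xi> \<le> b * norm \<xi>)"

end

theory Submission
  imports Defs
begin

text \<open>
  Take a test function \<open>\<psi>\<close> with \<open>\<integral>\<^sub>\<Omega> \<psi> > 0\<close> and put \<open>u = t \<psi>\<close>.
  As \<open>F\<close> is 1-homogeneous, the Dirichlet term of \<open>J(u)\<close> is quadratic in \<open>t\<close>; for small \<open>t\<close>
  the norm of \<open>u\<close> stays below \<open>R\<^sub>1\<close>, so the cut-off equals 1, and \<open>e\<^sup>s \<ge> 1 + s\<close> bounds
  the second integral below by \<open>|\<Omega>| + t \<integral>\<^sub>\<Omega> \<psi>\<close>. The linear gain beats the quadratic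
  loss as \<open>t \<rightarrow> 0\<close>. The test function itself is made from \<open>\<phi>\<close>: a product of the
  functions \<open>\<phi>(\<alpha> \<plusminus> \<kappa> (x\<^sub>j - c\<^sub>j))\<close>, which is \<open>C\<^sup>\<infinity>\<close>, equals 1 near \<open>c\<close> and
  vanishes outside a small square around \<open>c\<close>.
\<close>

lemma pds_Nil [simp]: "pds [] f = f"
  by (simp add: pds_def)

lemma pds_Cons [simp]: "pds (i # is) f = pd i (pds is f)"
  by (simp add: pds_def)

lemma smooth2_continuous: "smooth2 f \<Longrightarrow> continuous_on UNIV f"
  using pds_Nil unfolding smooth2_def by metis

lemma smooth2_continuous_grad2:
  assumes "smooth2 f"
  shows "continuous_on UNIV (grad2 f)"
proof -
  have "continuous_on UNIV (pds [i] f)" for i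
    using assms unfolding smooth2_def by blast
  then show ?thesis
    unfolding grad2_def by (intro continuous_on_vec_lambda) simp
qed

lemma pd_cmult:
  assumes "(\<lambda>s. f (x + s *\<^sub>R axis i 1)) differentiable (at 0)"
  shows "pd i (\<lambda>y. t * f y) x = t * pd i f x"
  using assms unfolding pd_def
  by (intro DERIV_imp_deriv DERIV_cmult) (simp add: DERIV_deriv_iff_real_differentiable)

lemma pds_cmult:
  assumes "smooth2 f"
  shows "pds is (\<lambda>y. t * f y) = (\<lambda>y. t * pds is f y)"
proof (induction "is")
  case (Cons i "is")
  have "(\<lambda>s. pds is f (x + s *\<^sub>R axis i 1)) differentiable (at 0)" for x
    using assms unfolding smooth2_def by blast
  then have "pd i (\<lambda>y. t * pds is f y) = (\<lambda>y. t * pds (i # is) f y)"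
    by (simp add: fun_eq_iff pd_cmult)
  then show ?case
    by (simp add: Cons.IH)
qed simp

lemma smooth2_cmult: "smooth2 f \<Longrightarrow> smooth2 (\<lambda>y. t * f y)"
  unfolding smooth2_def by (simp add: pds_cmult[unfolded smooth2_def] continuous_on_mult_left)

lemma grad2_cmult: "smooth2 f \<Longrightarrow> grad2 (\<lambda>y. t * f y) = (\<lambda>x. t *\<^sub>R grad2 f x)"
  using pds_cmult[of f "[_]" t] by (simp add: grad2_def vec_eq_iff fun_eq_iff)

lemma test_fn_cmult:
  assumes "test_fn \<Omega> f"
  shows "test_fn \<Omega> (\<lambda>y. t * f y)"
proof -
  have "closure {y. t * f y \<noteq> 0} \<subseteq> closure {y. f y \<noteq> 0}"
    by (intro closure_mono) auto
  moreover have "smooth2 (\<lambda>y. t * f y)"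
    using assms smooth2_cmult by (simp add: test_fn_def)
  ultimately show ?thesis
    using assms unfolding test_fn_def
    by (meson closed_closure compact_eq_bounded_closed bounded_subset order_trans)
qed

lemma test_fn_W012:
  assumes "test_fn \<Omega> f"
  shows "W012 \<Omega> f (grad2 f)"
proof -
  have "smooth2 f" using assms by (simp add: test_fn_def)
  then have "f \<in> borel_measurable lborel" "grad2 f \<in> borel_measurable lborel"
    using smooth2_continuous smooth2_continuous_grad2 borel_measurable_continuous_onI by auto
  then show ?thesis
    using assms unfolding W012_def by (intro conjI exI[of _ "\<lambda>k. f"]) auto
qed

inductive phi_algebra :: "(real \<Rightarrow> real) \<Rightarrow> (real^2 \<Rightarrow> real) \<Rightarrow> bool" for \<phi> where
  const: "phi_algebra \<phi> (\<lambda>x. c)"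
| deriv_affine_coord: "phi_algebra \<phi> (\<lambda>x. (deriv ^^ k) \<phi> (p + s * x $ j))"
| add: "phi_algebra \<phi> f \<Longrightarrow> phi_algebra \<phi> g \<Longrightarrow> phi_algebra \<phi> (\<lambda>x. f x + g x)"
| mult: "phi_algebra \<phi> f \<Longrightarrow> phi_algebra \<phi> g \<Longrightarrow> phi_algebra \<phi> (\<lambda>x. f x * g x)"

lemma smooth1_has_real_derivative:
  "smooth1 \<phi> \<Longrightarrow> ((deriv ^^ k) \<phi> has_real_derivative (deriv ^^ Suc k) \<phi> y) (at y)"
  unfolding smooth1_def by (simp add: DERIV_deriv_iff_real_differentiable)

lemma phi_algebra_continuous:
  assumes "smooth1 \<phi>" "phi_algebra \<phi> f"
  shows "continuous_on UNIV f"
  using assms(2)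
proof induction
  case (deriv_affine_coord k p s j)
  have "continuous_on UNIV ((deriv ^^ k) \<phi>)"
    using smooth1_has_real_derivative[OF assms(1)] DERIV_isCont
    by (blast intro: continuous_at_imp_continuous_on)
  then show ?case
    by (auto intro!: continuous_on_compose2[of UNIV "(deriv ^^ k) \<phi>"] continuous_intros)
qed (auto intro: continuous_intros)

lemma phi_algebra_has_line_derivative:
  assumes "smooth1 \<phi>" "phi_algebra \<phi> f"
  obtains g where "phi_algebra \<phi> g"
    "\<And>x. ((\<lambda>t. f (x + t *\<^sub>R axis i 1)) has_real_derivative g x) (at 0)"
  using assms(2)
proof (induction arbitrary: thesis)
  case const
  show ?case by (rule const.prems[OF phi_algebra.const[where c=0]]) simp
next
  case (deriv_affine_coord k p s j)
  define a where "a = s * axis i 1 $ j"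
  have "((\<lambda>t. (deriv ^^ k) \<phi> ((p + s * x $ j) + t * a)) has_real_derivative
          (deriv ^^ Suc k) \<phi> (p + s * x $ j) * a) (at 0)" for x
  proof -
    have "((\<lambda>t. (p + s * x $ j) + t * a) has_real_derivative a) (at 0)"
      by (auto intro!: derivative_eq_intros)
    then show ?thesis
      using DERIV_chain2 smooth1_has_real_derivative[OF assms(1)] by fastforce
  qed
  moreover have "p + s * (x + t *\<^sub>R axis i 1) $ j = (p + s * x $ j) + t * a" for x t
    by (simp add: a_def algebra_simps)
  ultimately show ?case
    by (intro deriv_affine_coord.prems[of "\<lambda>x. (deriv ^^ Suc k) \<phi> (p + s * x $ j) * a"]
          phi_algebra.mult phi_algebra.deriv_affine_coord phi_algebra.const)
       (simp_all add: add.assoc)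
next
  case (add f g)
  obtain f' g' where "phi_algebra \<phi> f'" "phi_algebra \<phi> g'"
    "\<And>x. ((\<lambda>t. f (x + t *\<^sub>R axis i 1)) has_real_derivative f' x) (at 0)"
    "\<And>x. ((\<lambda>t. g (x + t *\<^sub>R axis i 1)) has_real_derivative g' x) (at 0)"
    using add.IH by metis
  then show ?case
    by (intro add.prems[of "\<lambda>x. f' x + g' x"]) (auto intro: phi_algebra.add DERIV_add)
next
  case (mult f g)
  obtain f' g' where "phi_algebra \<phi> f'" "phi_algebra \<phi> g'"
    and df: "\<And>x. ((\<lambda>t. f (x + t *\<^sub>R axis i 1)) has_real_derivative f' x) (at 0)"
    and dg: "\<And>x. ((\<lambda>t. g (x + t *\<^sub>R axis i 1)) has_real_derivative g' x) (at 0)"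
    using mult.IH by metis
  moreover have
    "((\<lambda>t. f (x + t *\<^sub>R axis i 1) * g (x + t *\<^sub>R axis i 1)) has_real_derivative
      f' x * g x + f x * g' x) (at 0)" for x
    using DERIV_mult[OF df dg] by (simp add: mult.commute)
  ultimately show ?case
    using mult.hyps
    by (intro mult.prems[of "\<lambda>x. f' x * g x + f x * g' x"])
       (auto intro: phi_algebra.add phi_algebra.mult)
qed

lemma phi_algebra_pd:
  assumes "smooth1 \<phi>" "phi_algebra \<phi> f"
  shows "phi_algebra \<phi> (pd i f)"
    and "((\<lambda>t. f (x + t *\<^sub>R axis i 1)) has_real_derivative pd i f x) (at 0)"
proof -
  obtain g where g: "phi_algebra \<phi> g"
    "\<And>x. ((\<lambda>t. f (x + t *\<^sub>R axis i 1)) has_real_derivative g x) (at 0)"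
    using phi_algebra_has_line_derivative[OF assms, where i=i] by blast
  then have "pd i f = g"
    by (auto simp: pd_def fun_eq_iff intro: DERIV_imp_deriv)
  then show "phi_algebra \<phi> (pd i f)"
    and "((\<lambda>t. f (x + t *\<^sub>R axis i 1)) has_real_derivative pd i f x) (at 0)"
    using g by auto
qed

lemma phi_algebra_smooth2:
  assumes "smooth1 \<phi>" "phi_algebra \<phi> f"
  shows "smooth2 f"
proof -
  have pds: "phi_algebra \<phi> (pds is f)" for "is"
    by (induction "is") (simp_all add: assms phi_algebra_pd(1))
  show ?thesis
    unfolding smooth2_def
    using phi_algebra_continuous[OF assms(1) pds] phi_algebra_pd(2)[OF assms(1) pds]
    by (meson real_differentiable_def)
qed

lemma cutoff_nonneg:
  fixes \<phi> :: "real \<Rightarrow> real"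
  assumes "antimono \<phi>" "\<And>x. x \<ge> R\<^sub>2 \<Longrightarrow> \<phi> x = 0"
  shows "0 \<le> \<phi> y"
proof -
  have "\<phi> (max y R\<^sub>2) \<le> \<phi> y"
    by (rule antimonoD[OF assms(1)]) simp
  then show ?thesis
    using assms(2)[of "max y R\<^sub>2"] by simp
qed

definition plateau :: "(real \<Rightarrow> real) \<Rightarrow> real \<Rightarrow> real \<Rightarrow> real \<Rightarrow> real \<Rightarrow> real" where
  "plateau \<phi> R\<^sub>1 R\<^sub>2 \<delta> y =
     \<phi> (2 * R\<^sub>1 - R\<^sub>2 + 2 * (R\<^sub>2 - R\<^sub>1) / \<delta> * y) * \<phi> (2 * R\<^sub>1 - R\<^sub>2 - 2 * (R\<^sub>2 - R\<^sub>1) / \<delta> * y)"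

lemma plateau_eq_1:
  assumes "R\<^sub>1 < R\<^sub>2" "\<delta> > 0" "\<bar>y\<bar> \<le> \<delta> / 2" "\<And>x. x \<le> R\<^sub>1 \<Longrightarrow> \<phi> x = 1"
  shows "plateau \<phi> R\<^sub>1 R\<^sub>2 \<delta> y = 1"
proof -
  define \<kappa> where "\<kappa> = 2 * (R\<^sub>2 - R\<^sub>1) / \<delta>"
  have "\<kappa> > 0" "\<kappa> * \<delta> = 2 * (R\<^sub>2 - R\<^sub>1)"
    using assms(1,2) by (simp_all add: \<kappa>_def)
  then have "\<bar>\<kappa> * y\<bar> \<le> R\<^sub>2 - R\<^sub>1"
    using mult_left_mono[OF assms(3), of \<kappa>] by (simp add: abs_mult)
  then have "2 * R\<^sub>1 - R\<^sub>2 + \<kappa> * y \<le> R\<^sub>1" "2 * R\<^sub>1 - R\<^sub>2 - \<kappa> * y \<le> R\<^sub>1"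
    by linarith+
  then show ?thesis
    unfolding plateau_def \<kappa>_def[symmetric] using assms(4) by simp
qed

lemma plateau_nonzero_imp:
  assumes "R\<^sub>1 < R\<^sub>2" "\<delta> > 0" "\<And>x. x \<ge> R\<^sub>2 \<Longrightarrow> \<phi> x = 0"
    and "plateau \<phi> R\<^sub>1 R\<^sub>2 \<delta> y \<noteq> 0"
  shows "\<bar>y\<bar> < \<delta>"
proof -
  define \<kappa> where "\<kappa> = 2 * (R\<^sub>2 - R\<^sub>1) / \<delta>"
  have "\<kappa> > 0" "\<kappa> * \<delta> = 2 * (R\<^sub>2 - R\<^sub>1)"
    using assms(1,2) by (simp_all add: \<kappa>_def)
  have "2 * R\<^sub>1 - R\<^sub>2 + \<kappa> * y < R\<^sub>2" "2 * R\<^sub>1 - R\<^sub>2 - \<kappa> * y < R\<^sub>2"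
    using assms(3,4) unfolding plateau_def \<kappa>_def[symmetric]
    by (metis mult_zero_left mult_zero_right not_less)+
  then have "\<kappa> * \<bar>y\<bar> < \<kappa> * \<delta>"
    using \<open>\<kappa> * \<delta> = _\<close> \<open>\<kappa> > 0\<close> by (simp add: abs_if)
  then show ?thesis
    using \<open>\<kappa> > 0\<close> by simp
qed

lemma phi_algebra_plateau_coord: "phi_algebra \<phi> (\<lambda>x. plateau \<phi> R\<^sub>1 R\<^sub>2 \<delta> (x $ j - d))"
proof -
  define \<kappa> where "\<kappa> = 2 * (R\<^sub>2 - R\<^sub>1) / \<delta>"
  have "phi_algebra \<phi> (\<lambda>x. (deriv ^^ 0) \<phi> ((2 * R\<^sub>1 - R\<^sub>2 - \<kappa> * d) + \<kappa> * x $ j) *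
                             (deriv ^^ 0) \<phi> ((2 * R\<^sub>1 - R\<^sub>2 + \<kappa> * d) + (- \<kappa>) * x $ j))"
    by (intro phi_algebra.mult phi_algebra.deriv_affine_coord)
  then show ?thesis
    unfolding plateau_def \<kappa>_def[symmetric] by (simp add: algebra_simps)
qed

lemma exists_plateau_test_fn:
  fixes \<Omega> :: "(real^2) set"
  assumes "open \<Omega>" "c \<in> \<Omega>" "smooth1 \<phi>" "antimono \<phi>" "R\<^sub>1 < R\<^sub>2"
    and "\<And>x. x \<le> R\<^sub>1 \<Longrightarrow> \<phi> x = 1" "\<And>x. x \<ge> R\<^sub>2 \<Longrightarrow> \<phi> x = 0"
  obtains \<psi> r where "test_fn \<Omega> \<psi>" "\<And>x. 0 \<le> \<psi> x" "0 < r" "ball c r \<subseteq> \<Omega>"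
    "\<And>x. x \<in> ball c r \<Longrightarrow> \<psi> x = 1"
proof -
  obtain \<epsilon> where "\<epsilon> > 0" "cball c \<epsilon> \<subseteq> \<Omega>"
    using assms(1,2) open_contains_cball by blast
  define \<delta> where "\<delta> = \<epsilon> / 2"
  have "\<delta> > 0" using \<open>\<epsilon> > 0\<close> by (simp add: \<delta>_def)
  define \<psi> where "\<psi> x = plateau \<phi> R\<^sub>1 R\<^sub>2 \<delta> (x $ 1 - c $ 1) * plateau \<phi> R\<^sub>1 R\<^sub>2 \<delta> (x $ 2 - c $ 2)"
    for x :: "real^2"
  have "phi_algebra \<phi> \<psi>"
    unfolding \<psi>_def by (intro phi_algebra.mult phi_algebra_plateau_coord)
  then have "smooth2 \<psi>"
    using assms(3) phi_algebra_smooth2 by blast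
  have "x \<in> cball c \<epsilon>" if "\<psi> x \<noteq> 0" for x
  proof -
    have "\<bar>(x - c) $ 1\<bar> < \<delta>" "\<bar>(x - c) $ 2\<bar> < \<delta>"
      using \<open>\<psi> x \<noteq> 0\<close> plateau_nonzero_imp[OF assms(5) \<open>\<delta> > 0\<close> assms(7)]
      unfolding \<psi>_def by auto
    moreover have "norm (x - c) \<le> \<bar>(x - c) $ 1\<bar> + \<bar>(x - c) $ 2\<bar>"
      using norm_le_l1_cart[of "x - c"] by (simp add: UNIV_2)
    ultimately show ?thesis
      by (simp add: dist_norm norm_minus_commute \<delta>_def)
  qed
  then have "closure {x. \<psi> x \<noteq> 0} \<subseteq> cball c \<epsilon>"
    by (intro closure_minimal) auto
  then have "test_fn \<Omega> \<psi>"
    unfolding test_fn_def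
    using \<open>smooth2 \<psi>\<close> \<open>cball c \<epsilon> \<subseteq> \<Omega>\<close> closure_subset[of "{x. \<psi> x \<noteq> 0}"]
    by (auto simp: compact_closure intro: bounded_subset[OF bounded_cball])
  moreover have "0 \<le> \<psi> x" for x
    using cutoff_nonneg[OF assms(4,7)] by (simp add: \<psi>_def plateau_def)
  moreover have "\<psi> x = 1" if "x \<in> ball c (\<delta> / 2)" for x
  proof -
    have "\<bar>x $ j - c $ j\<bar> \<le> \<delta> / 2" for j
      using that component_le_norm_cart[of "x - c" j]
      by (simp add: dist_norm norm_minus_commute)
    then show ?thesis
      unfolding \<psi>_def using plateau_eq_1[OF assms(5) \<open>\<delta> > 0\<close> _ assms(6)] by simp
  qed
  moreover have "ball c (\<delta> / 2) \<subseteq> \<Omega>"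
    using \<open>cball c \<epsilon> \<subseteq> \<Omega>\<close> \<open>\<delta> > 0\<close> by (auto simp: \<delta>_def)
  ultimately show ?thesis
    using that[of \<psi> "\<delta> / 2"] \<open>\<delta> > 0\<close> by simp
qed

lemma continuous_set_integrable:
  fixes f :: "'a::euclidean_space \<Rightarrow> 'b::{banach, second_countable_topology}"
  assumes "continuous_on UNIV f" "bounded \<Omega>" "\<Omega> \<in> sets lborel"
  shows "set_integrable lborel \<Omega> f"
proof -
  have "set_integrable lborel (closure \<Omega>) f"
    unfolding set_integrable_def using assms(1,2)
    by (intro borel_integrable_compact) (auto simp: compact_closure intro: continuous_on_subset)
  then show ?thesis
    by (rule set_integrable_subset) (use assms(3) closure_subset in auto)
qed

lemma set_integral_pos_if_eq_1_on_ball: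
  fixes \<psi> :: "'a::euclidean_space \<Rightarrow> real"
  assumes "set_integrable lborel \<Omega> \<psi>" "\<And>x. 0 \<le> \<psi> x"
    and "0 < r" "ball c r \<subseteq> \<Omega>" "\<And>x. x \<in> ball c r \<Longrightarrow> \<psi> x = 1"
  shows "0 < (\<integral>x\<in>\<Omega>. \<psi> x \<partial>lborel)"
proof -
  have "0 < measure lborel (ball c r)"
    using content_ball_pos[OF assms(3)] .
  also have "\<dots> = (LINT x|lborel. indicator (ball c r) x)"
    by (simp add: emeasure_bounded_finite)
  also have "\<dots> \<le> (LINT x|lborel. indicator \<Omega> x *\<^sub>R \<psi> x)"
  proof (rule integral_mono)
    show "integrable lborel (indicator (ball c r) :: 'a \<Rightarrow> real)"
      by (intro integrable_real_indicator emeasure_bounded_finite) auto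
    show "integrable lborel (\<lambda>x. indicator \<Omega> x *\<^sub>R \<psi> x)"
      using assms(1) by (simp add: set_integrable_def)
    show "indicator (ball c r) x \<le> indicator \<Omega> x *\<^sub>R \<psi> x" for x
      using assms(2,4,5) by (auto simp: indicator_def)
  qed
  finally show ?thesis
    by (simp add: set_lebesgue_integral_def)
qed

lemma exists_test_fn_pos_integral:
  fixes \<Omega> :: "(real^2) set"
  assumes "open \<Omega>" "bounded \<Omega>" "\<Omega> \<noteq> {}" "smooth1 \<phi>" "antimono \<phi>" "R\<^sub>1 < R\<^sub>2"
    and "\<And>x. x \<le> R\<^sub>1 \<Longrightarrow> \<phi> x = 1" "\<And>x. x \<ge> R\<^sub>2 \<Longrightarrow> \<phi> x = 0"
  obtains \<psi> where "test_fn \<Omega> \<psi>" "0 < (\<integral>x\<in>\<Omega>. \<psi> x \<partial>lborel)"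
proof -
  obtain c where "c \<in> \<Omega>"
    using assms(3) by blast
  then obtain \<psi> r where \<psi>: "test_fn \<Omega> \<psi>" "\<And>x. 0 \<le> \<psi> x" "0 < r" "ball c r \<subseteq> \<Omega>"
    "\<And>x. x \<in> ball c r \<Longrightarrow> \<psi> x = 1"
    using exists_plateau_test_fn[OF assms(1) _ assms(4-8)] by blast
  have "set_integrable lborel \<Omega> \<psi>"
    using \<psi>(1) smooth2_continuous assms(1,2)
    by (intro continuous_set_integrable) (auto simp: test_fn_def)
  then show ?thesis
    using that \<psi> set_integral_pos_if_eq_1_on_ball by blast
qed

lemma set_integral_exp_ge:
  fixes u :: "'a \<Rightarrow> real"
  assumes "set_integrable M \<Omega> u" "set_integrable M \<Omega> (\<lambda>x. exp (u x))"
    and "\<Omega> \<in> sets M" "emeasure M \<Omega> < \<infinity>"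
  shows "measure M \<Omega> + (\<integral>x\<in>\<Omega>. u x \<partial>M) \<le> (\<integral>x\<in>\<Omega>. exp (u x) \<partial>M)"
proof -
  have one: "set_integrable M \<Omega> (\<lambda>x. 1 :: real)"
    using assms(3,4) by (simp add: set_integrable_def integrable_real_indicator)
  have "measure M \<Omega> + (\<integral>x\<in>\<Omega>. u x \<partial>M) = (\<integral>x\<in>\<Omega>. 1 + u x \<partial>M)"
    using assms(3,4) one assms(1) by (simp add: set_integral_const)
  also have "\<dots> \<le> (\<integral>x\<in>\<Omega>. exp (u x) \<partial>M)"
    using one assms(1,2) by (intro set_integral_mono) (auto simp: exp_ge_add_one_self)
  finally show ?thesis .
qed

lemma W012_norm_scaleR: "W012_norm \<Omega> (\<lambda>x. t *\<^sub>R Du x) = \<bar>t\<bar> * W012_norm \<Omega> Du"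
  by (simp add: W012_norm_def power_mult_distrib real_sqrt_mult)

lemma exists_small_scale:
  fixes A B M R :: real
  assumes "0 < B" "0 < R"
  shows "\<exists>t>0. t * M \<le> R \<and> t\<^sup>2 * A / 2 < t * B"
proof -
  define t where "t = min (R / (\<bar>M\<bar> + 1)) (B / (\<bar>A\<bar> + 1))"
  have "t > 0"
    using assms by (simp add: t_def)
  have "t \<le> R / (\<bar>M\<bar> + 1)" "t \<le> B / (\<bar>A\<bar> + 1)"
    by (simp_all add: t_def)
  then have "t * (\<bar>M\<bar> + 1) \<le> R" "t * (\<bar>A\<bar> + 1) \<le> B"
    by (simp_all add: pos_le_divide_eq add_pos_nonneg)
  moreover have "t * M \<le> t * (\<bar>M\<bar> + 1)"
    using \<open>t > 0\<close> by (intro mult_left_mono) auto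
  moreover have "t * A / 2 < t * (\<bar>A\<bar> + 1)"
  proof -
    have "t * A \<le> t * \<bar>A\<bar>" "0 \<le> t * \<bar>A\<bar>"
      using \<open>t > 0\<close> by (simp_all add: mult_left_mono)
    moreover have "t * (\<bar>A\<bar> + 1) = t * \<bar>A\<bar> + t"
      by (simp add: distrib_left)
    ultimately show ?thesis
      using \<open>t > 0\<close> by linarith
  qed
  ultimately have "t * M \<le> R" "t * A / 2 < B"
    by linarith+
  then have "t * M \<le> R" "t * (t * A / 2) < t * B"
    using \<open>t > 0\<close> by simp_all
  then show ?thesis
    using \<open>t > 0\<close> by (intro exI[of _ t]) (simp add: power2_eq_square)
qed

theorem lemma3p2:
  fixes \<Omega> :: "(real^2) set" and F :: "real^2 \<Rightarrow> real" and \<phi> :: "real \<Rightarrow> real"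
    and a b \<mu> \<Lambda> lam R\<^sub>1 R\<^sub>2 :: real
  assumes "open \<Omega>" "connected \<Omega>" "bounded \<Omega>" "\<Omega> \<noteq> {}"
    and "F_assms F a b \<mu> \<Lambda>"
    and "lam > 0" and "0 < R\<^sub>1" and "R\<^sub>1 < R\<^sub>2"
    and "smooth1 \<phi>" and "antimono \<phi>"
    and "\<And>x. x \<le> R\<^sub>1 \<Longrightarrow> \<phi> x = 1" and "\<And>x. x \<ge> R\<^sub>2 \<Longrightarrow> \<phi> x = 0"
  shows "\<exists>u Du. W012 \<Omega> u Du \<and>
     set_integrable lborel \<Omega> (\<lambda>x. \<phi> (W012_norm \<Omega> Du) * exp (u x)) \<and>
     (1/2) * (\<integral>x\<in>\<Omega>. (F (Du x))\<^sup>2 \<partial>lborel)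
       - lam * (\<integral>x\<in>\<Omega>. \<phi> (W012_norm \<Omega> Du) * exp (u x) \<partial>lborel)
     < - lam * measure lborel \<Omega>"
proof -
  obtain \<psi> where \<psi>: "test_fn \<Omega> \<psi>" "0 < (\<integral>x\<in>\<Omega>. \<psi> x \<partial>lborel)"
    using exists_test_fn_pos_integral[OF assms(1,3,4,9,10,8,11,12)] by blast
  define A where "A = (\<integral>x\<in>\<Omega>. (F (grad2 \<psi> x))\<^sup>2 \<partial>lborel)"
  obtain t where t: "t > 0" "t * W012_norm \<Omega> (grad2 \<psi>) \<le> R\<^sub>1"
    "t\<^sup>2 * A / 2 < t * (lam * (\<integral>x\<in>\<Omega>. \<psi> x \<partial>lborel))"
    using exists_small_scale \<psi>(2) assms(6,7) by (metis mult_pos_pos)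
  define u where "u = (\<lambda>x. t * \<psi> x)"
  define Du where "Du = (\<lambda>x. t *\<^sub>R grad2 \<psi> x)"
  have "Du = grad2 u"
    using \<psi>(1) by (simp add: u_def Du_def test_fn_def grad2_cmult)
  then have "W012 \<Omega> u Du"
    using test_fn_W012[OF test_fn_cmult[OF \<psi>(1)]] by (simp add: u_def)
  moreover have "\<phi> (W012_norm \<Omega> Du) = 1"
    using t(1,2) assms(11) by (simp add: Du_def W012_norm_scaleR)
  moreover have "(\<integral>x\<in>\<Omega>. (F (Du x))\<^sup>2 \<partial>lborel) = t\<^sup>2 * A"
    using assms(5) by (simp add: F_assms_def Du_def A_def power_mult_distrib)
  moreover have exp_u: "set_integrable lborel \<Omega> (\<lambda>x. exp (u x))" "set_integrable lborel \<Omega> u"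
    using \<psi>(1) smooth2_continuous assms(1,3) unfolding test_fn_def u_def
    by (auto intro!: continuous_set_integrable continuous_intros)
  moreover have "lam * (measure lborel \<Omega> + t * (\<integral>x\<in>\<Omega>. \<psi> x \<partial>lborel))
      \<le> lam * (\<integral>x\<in>\<Omega>. exp (u x) \<partial>lborel)"
    using set_integral_exp_ge[OF exp_u(2,1)] emeasure_bounded_finite[OF assms(3)] assms(1,6)
    by (simp add: u_def borel_open)
  ultimately show ?thesis
    using t(3) by (intro exI[of _ u] exI[of _ Du]) (auto simp: algebra_simps)
qed

end
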